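(* Let $N, L \ge 1$ be integers and let $\Delta = (\delta_{ij})_{1\le i,j\le N}$ be a real $N\times N$ matrix of dissimilarities. For $\mathbf{z} = (x_{11},\dots,x_{1L},\dots,x_{N1},\dots,x_{NL})^T \in \mathbb{R}^{N L}$, write $\mathbf{x}_i = (x_{i1},\dots,x_{iL})^T \in \mathbb{R}^L$, $d_{ij}(\mathbf{z}) = \|\mathbf{x}_i - \mathbf{x}_j\|_2$, and $$g(\mathbf{z}) = \frac{1}{N^2}\sum_{i=1}^N\sum_{j=1}^N \big(d_{ij}(\mathbf{z}) - \delta_{ij}\big)^2 .$$ Let $\mathbf{z}^{(0)} \in \mathbb{R}^{NL}$ and $\Delta^{(0)} > 0$, and let $(\mathbf{z}^{(k)}, \Delta^{(k)})_{k\ge 0}$ be the infinite sequence generated by pattern search MDS as described in the context. Assume that the level set $\{\mathbf{z} \in \mathbb{R}^{NL} : g(\mathbf{z}) \le g(\mathbf{z}^{(0)})\}$ is closed and bounded and that $g$ is continuously differentiable on $\bigcup_{\mathbf{a}} B(\mathbf{a},\eta)$, the union over all $\mathbf{a}$ in this level set of the open balls of some fixed radius $\eta > 0$. Then $$\liminf_{k\to\infty} \|\nabla g(\mathbf{z}^{(k)})\| = 0 .$$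
   Context: Pattern search MDS (monotone version). Let $\mathbf{e}_1,\dots,\mathbf{e}_{NL}$ be the standard unit vectors of $\mathbb{R}^{NL}$; the coordinates belonging to point $i$ are those with indices $(i-1)L+1,\dots,iL$. Iteration $k$ (an "epoch") proceeds as follows. Set $\mathbf{y}_0 = \mathbf{z}^{(k)}$. For $i = 1,\dots,N$ in turn: among the $2L$ candidate points $\mathbf{y}_{i-1} \pm \Delta^{(k)} \mathbf{e}_{(i-1)L+l}$, $l = 1,\dots,L$ (moves of point $\mathbf{x}_i$ by $\pm\Delta^{(k)}$ along one coordinate axis of $\mathbb{R}^L$), take one with the smallest value of $g$; if that value is strictly smaller than $g(\mathbf{y}_{i-1})$, set $\mathbf{y}_i$ equal to that candidate, otherwise set $\mathbf{y}_i = \mathbf{y}_{i-1}$. Then set $\mathbf{z}^{(k+1)} = \mathbf{y}_N$ (so the step is $\mathbf{z}^{(k+1)} - \mathbf{z}^{(k)} = \Delta^{(k)}\hat{\mathbf{s}}^{(k)}$ with $\hat{\mathbf{s}}^{(k)}$ a sum of signed unit vectors, one or none per point). If $g(\mathbf{z}^{(k+1)}) < g(\mathbf{z}^{(k)})$ (successful iteration) set $\Delta^{(k+1)} = \Delta^{(k)}$; otherwise (unsuccessful iteration) $\mathbf{z}^{(k+1)} = \mathbf{z}^{(k)}$ and $\Delta^{(k+1)} = \tfrac{1}{2}\Delta^{(k)}$. *)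

theory Defs
  imports "HOL-Analysis.Analysis" "HOL-Library.Extended_Real"
begin

text \<open>A configuration z in R^{NL} is a vector of N points (indexed by the finite
linearly ordered type 'n, card = N) each in R^L (indexed by the finite type 'l).\<close>

definition mds_stress :: "real^'n^'n \<Rightarrow> real^'l^'n::finite \<Rightarrow> real" where
  "mds_stress \<delta> z = (1 / (real CARD('n))^2) *
     (\<Sum>i\<in>UNIV. \<Sum>j\<in>UNIV. (norm (z$i - z$j) - \<delta>$i$j)^2)"

definition ps_move :: "real^'l^'n \<Rightarrow> 'n \<Rightarrow> 'l \<Rightarrow> real \<Rightarrow> real \<Rightarrow> real^'l^'n" where
  "ps_move y i l s D = (\<chi> j. if j = i then y$j + ((s * D) *\<^sub>R axis l 1) else y$j)"

definition ps_candidates :: "real^'l^'n \<Rightarrow> 'n \<Rightarrow> real \<Rightarrow> (real^'l^'n) set" where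
  "ps_candidates y i D = {ps_move y i l s D | l s. s \<in> {-1, 1}}"

definition ps_point_step ::
  "(real^'l^'n \<Rightarrow> real) \<Rightarrow> real \<Rightarrow> 'n \<Rightarrow> real^'l^'n \<Rightarrow> real^'l^'n \<Rightarrow> bool" where
  "ps_point_step g D i y y' \<longleftrightarrow>
     (\<exists>c\<in>ps_candidates y i D. (\<forall>c'\<in>ps_candidates y i D. g c \<le> g c') \<and>
        y' = (if g c < g y then c else y))"

inductive ps_sweep ::
  "(real^'l^'n \<Rightarrow> real) \<Rightarrow> real \<Rightarrow> 'n list \<Rightarrow> real^'l^'n \<Rightarrow> real^'l^'n \<Rightarrow> bool"
  for g D where
  "ps_sweep g D [] y y"
| "ps_point_step g D i y y1 \<Longrightarrow> ps_sweep g D is y1 y2 \<Longrightarrow> ps_sweep g D (i # is) y y2"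

definition ps_epoch ::
  "(real^('l::finite)^('n::{finite,linorder}) \<Rightarrow> real) \<Rightarrow> real \<Rightarrow> real^('l::finite)^('n::{finite,linorder}) \<Rightarrow> real^('l::finite)^('n::{finite,linorder}) \<Rightarrow> bool" where
  "ps_epoch g D z z' \<longleftrightarrow> ps_sweep g D (sorted_list_of_set (UNIV :: ('n::{finite,linorder}) set)) z z'"

definition pattern_search_seq ::
  "(real^('l::finite)^('n::{finite,linorder}) \<Rightarrow> real) \<Rightarrow> real^('l::finite)^('n::{finite,linorder}) \<Rightarrow> real
    \<Rightarrow> (nat \<Rightarrow> real^('l::finite)^('n::{finite,linorder})) \<Rightarrow> (nat \<Rightarrow> real) \<Rightarrow> bool" where
  "pattern_search_seq g z0 D0 z D \<longleftrightarrow>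
     z 0 = z0 \<and> D 0 = D0 \<and>
     (\<forall>k. ps_epoch g (D k) (z k) (z (Suc k)) \<and>
          D (Suc k) = (if g (z (Suc k)) < g (z k) then D k else D k / 2))"

definition gradient :: "('a::real_inner \<Rightarrow> real) \<Rightarrow> 'a \<Rightarrow> 'a" where
  "gradient f x = (THE v. GDERIV f x :> v)"

end

theory Submission
  imports Defs
begin

(* An unsuccessful epoch moves no point, so all 2NL coordinate moves z +- Delta e_j from z = z^(k)
   were tried and none decreased g. While epochs succeed, Delta stays fixed and the iterates are
   distinct points (g strictly decreases) of the single mesh z^(M) + Delta Z^(NL), hence pairwise
   Delta-separated; inside the bounded level set this cannot go on forever. So unsuccessful epochs
   recur and Delta^(k) tends to 0. At an unsuccessful epoch the mean value theorem gives, for each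
   direction +-e_j, a point within Delta of z where that directional derivative is nonnegative;
   uniform continuity of the gradient on a compact neighbourhood of the level set transfers this to z,
   so the gradient at z is small once Delta is. *)

lemma inner_gradient_gt_if_no_descent:
  fixes g :: "'a::real_inner \<Rightarrow> real" and G :: "'a \<Rightarrow> 'a"
  assumes h: "0 < h" and e: "norm e = 1"
    and der: "\<And>t. t \<in> {0..h} \<Longrightarrow> GDERIV g (x + t *\<^sub>R e) :> G (x + t *\<^sub>R e)"
    and near: "\<And>t. t \<in> {0..h} \<Longrightarrow> norm (G (x + t *\<^sub>R e) - G x) < \<epsilon>"
    and no_descent: "g x \<le> g (x + h *\<^sub>R e)"
  shows "- \<epsilon> < e \<bullet> G x"
proof -
  let ?f = "\<lambda>t. g (x + t *\<^sub>R e)"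
  have "(?f has_derivative (\<lambda>s. (s *\<^sub>R e) \<bullet> G (x + t *\<^sub>R e))) (at t within {0..h})"
    if "t \<in> {0..h}" for t
  proof -
    have "((\<lambda>t. x + t *\<^sub>R e) has_derivative (\<lambda>s. s *\<^sub>R e)) (at t within {0..h})"
      by (auto intro!: derivative_eq_intros)
    from has_derivative_compose[OF this der[OF that, unfolded gderiv_def]] show ?thesis
      by simp
  qed
  then obtain t where t: "t \<in> {0<..<h}" and "?f h - ?f 0 = (h *\<^sub>R e) \<bullet> G (x + t *\<^sub>R e)"
    using mvt_simple[OF h, of ?f "\<lambda>t s. (s *\<^sub>R e) \<bullet> G (x + t *\<^sub>R e)"] by auto
  with no_descent have "0 \<le> h * (e \<bullet> G (x + t *\<^sub>R e))"
    by simp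
  with h have slope: "0 \<le> e \<bullet> G (x + t *\<^sub>R e)"
    by (simp add: zero_le_mult_iff)
  have "\<bar>e \<bullet> (G (x + t *\<^sub>R e) - G x)\<bar> \<le> norm (G (x + t *\<^sub>R e) - G x)"
    using Cauchy_Schwarz_ineq2[of e "G (x + t *\<^sub>R e) - G x"] e by simp
  also have "\<dots> < \<epsilon>"
    using near t by simp
  finally have "\<bar>e \<bullet> (G (x + t *\<^sub>R e) - G x)\<bar> < \<epsilon>" .
  with slope show ?thesis
    by (simp add: inner_diff_right)
qed

definition mesh_local_min :: "('a::euclidean_space \<Rightarrow> real) \<Rightarrow> real \<Rightarrow> 'a \<Rightarrow> bool" where
  "mesh_local_min g h x \<longleftrightarrow> (\<forall>b\<in>Basis. g x \<le> g (x + h *\<^sub>R b) \<and> g x \<le> g (x - h *\<^sub>R b))"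

lemma gradient_small_at_mesh_local_min:
  fixes g :: "'a::euclidean_space \<Rightarrow> real" and G :: "'a \<Rightarrow> 'a"
  assumes K: "compact K" and \<eta>: "0 < \<eta>"
    and der: "\<And>y. y \<in> (\<Union>a\<in>K. ball a \<eta>) \<Longrightarrow> GDERIV g y :> G y"
    and cont: "continuous_on (\<Union>a\<in>K. ball a \<eta>) G"
    and \<epsilon>: "0 < \<epsilon>"
  obtains d where "0 < d"
    and "\<And>x h. x \<in> K \<Longrightarrow> 0 < h \<Longrightarrow> h < d \<Longrightarrow> mesh_local_min g h x \<Longrightarrow> norm (G x) \<le> \<epsilon>"
proof -
  define K' where "K' = {x + y | x y. x \<in> K \<and> y \<in> cball (0::'a) (\<eta>/2)}"
  have K'_sub: "K' \<subseteq> (\<Union>a\<in>K. ball a \<eta>)"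
  proof
    fix y assume "y \<in> K'"
    then obtain x v where "y = x + v" "x \<in> K" "norm v \<le> \<eta>/2"
      unfolding K'_def by auto
    with \<eta> show "y \<in> (\<Union>a\<in>K. ball a \<eta>)"
      by (auto simp: dist_norm intro!: bexI[of _ x])
  qed
  have "compact K'"
    unfolding K'_def by (rule compact_sums[OF K compact_cball])
  then have "uniformly_continuous_on K' G"
    by (rule compact_uniformly_continuous[OF continuous_on_subset[OF cont K'_sub]])
  moreover define \<epsilon>' where "\<epsilon>' = \<epsilon> / DIM('a)"
  moreover have "0 < \<epsilon>'"
    using \<epsilon> by (simp add: \<epsilon>'_def)
  ultimately obtain d0 where d0: "0 < d0"
    and uc: "\<And>x x'. x \<in> K' \<Longrightarrow> x' \<in> K' \<Longrightarrow> dist x' x < d0 \<Longrightarrow> dist (G x') (G x) < \<epsilon>'"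
    unfolding uniformly_continuous_on_def by blast
  have in_K': "x + y \<in> K'" if "x \<in> K" "norm y \<le> \<eta>/2" for x y
    using that unfolding K'_def by auto
  show ?thesis
  proof
    show "0 < min d0 (\<eta>/2)" using d0 \<eta> by simp
    fix x h
    assume x: "x \<in> K" and h: "0 < h" "h < min d0 (\<eta>/2)"
      and min: "mesh_local_min g h x"
    have directional: "- \<epsilon>' < e \<bullet> G x" if e: "norm e = 1" and ge: "g x \<le> g (x + h *\<^sub>R e)" for e
    proof (rule inner_gradient_gt_if_no_descent[OF h(1) e _ _ ge])
      fix t :: real assume t: "t \<in> {0..h}"
      have "norm (t *\<^sub>R e) \<le> \<eta>/2" and close: "dist (x + t *\<^sub>R e) x < d0"
        using t h e by (auto simp: dist_norm)
      then have on_K': "x + t *\<^sub>R e \<in> K'"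
        using in_K'[OF x] by blast
      with K'_sub show "GDERIV g (x + t *\<^sub>R e) :> G (x + t *\<^sub>R e)"
        by (intro der) blast
      have "x \<in> K'"
        using in_K'[OF x, of 0] \<eta> by simp
      with uc[OF _ on_K' close] show "norm (G (x + t *\<^sub>R e) - G x) < \<epsilon>'"
        by (simp add: dist_norm)
    qed
    have "\<bar>G x \<bullet> b\<bar> \<le> \<epsilon>'" if b: "b \<in> Basis" for b
    proof -
      have "- \<epsilon>' < b \<bullet> G x" and "- \<epsilon>' < (- b) \<bullet> G x"
        using directional[of b] directional[of "- b"] min b by (simp_all add: mesh_local_min_def)
      then show ?thesis
        by (simp add: inner_commute)
    qed
    then have "(\<Sum>b\<in>Basis. \<bar>G x \<bullet> b\<bar>) \<le> (\<Sum>b\<in>(Basis::'a set). \<epsilon>')"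
      by (rule sum_mono)
    with norm_le_l1[of "G x"] show "norm (G x) \<le> \<epsilon>"
      by (simp add: \<epsilon>'_def)
  qed
qed

definition on_mesh :: "real \<Rightarrow> 'a::euclidean_space \<Rightarrow> 'a \<Rightarrow> bool" where
  "on_mesh D x y \<longleftrightarrow> (\<forall>b\<in>Basis. \<exists>q::int. (y - x) \<bullet> b = of_int q * D)"

lemma on_mesh_refl: "on_mesh D x x"
  unfolding on_mesh_def by (auto intro: exI[of _ 0])

lemma on_mesh_trans:
  assumes "on_mesh D x y" and "on_mesh D y z"
  shows "on_mesh D x z"
  unfolding on_mesh_def
proof
  fix b :: 'a assume b: "b \<in> Basis"
  obtain p q :: int where "(y - x) \<bullet> b = of_int p * D" and "(z - y) \<bullet> b = of_int q * D"
    using assms b unfolding on_mesh_def by blast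
  then have "(z - x) \<bullet> b = of_int (p + q) * D"
    by (simp add: inner_diff_left algebra_simps)
  then show "\<exists>q::int. (z - x) \<bullet> b = of_int q * D" ..
qed

lemma on_mesh_add_Basis:
  assumes "b \<in> Basis"
  shows "on_mesh D x (x + (of_int q * D) *\<^sub>R b)"
  unfolding on_mesh_def
proof
  fix b' :: 'a assume "b' \<in> Basis"
  with assms show "\<exists>q'::int. (x + (of_int q * D) *\<^sub>R b - x) \<bullet> b' = of_int q' * D"
    by (auto simp: inner_Basis intro: exI[of _ q] exI[of _ 0])
qed

lemma on_mesh_dist_ge:
  assumes "on_mesh D c x" and "on_mesh D c y" and "x \<noteq> y" and "0 < D"
  shows "D \<le> dist x y"
proof -
  obtain b :: 'a where b: "b \<in> Basis" and "(y - x) \<bullet> b \<noteq> 0"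
    using \<open>x \<noteq> y\<close> euclidean_eqI[of "y - x" 0] by auto
  moreover obtain p q :: int where "(x - c) \<bullet> b = of_int p * D" and "(y - c) \<bullet> b = of_int q * D"
    using assms(1,2) b unfolding on_mesh_def by blast
  ultimately have "(y - x) \<bullet> b = of_int (q - p) * D" and "q - p \<noteq> 0"
    by (auto simp: inner_diff_left algebra_simps)
  then have "D \<le> \<bar>(y - x) \<bullet> b\<bar>"
    using \<open>0 < D\<close> by (auto simp: abs_mult)
  also have "\<dots> \<le> norm (y - x)"
    using b by (rule Basis_le_norm)
  finally show ?thesis
    by (simp add: dist_norm norm_minus_commute)
qed

lemma ps_move_eq_add_Basis: "ps_move y i l s D = y + (s * D) *\<^sub>R axis i (axis l 1)"
  unfolding ps_move_def by (simp add: vec_eq_iff axis_def)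

lemma Basis_vec_vec_cases:
  assumes "(b :: real^'l^'n) \<in> Basis"
  obtains i l where "b = axis i (axis l 1)"
  using assms unfolding Basis_vec_def by auto

lemma ps_sweep_descent:
  assumes "ps_sweep g D is y y'"
  shows "g y' \<le> g y \<and>
    (\<not> g y' < g y \<longrightarrow> y' = y \<and> (\<forall>i\<in>set is. \<forall>c\<in>ps_candidates y i D. g y \<le> g c))"
  using assms
proof (induction rule: ps_sweep.induct)
  case (1 y)
  then show ?case by simp
next
  case (2 i y y1 "is" y2)
  from 2(1) obtain c where c: "c \<in> ps_candidates y i D" "\<forall>c'\<in>ps_candidates y i D. g c \<le> g c'"
    and y1: "y1 = (if g c < g y then c else y)"
    unfolding ps_point_step_def by blast
  show ?case
  proof (cases "g c < g y")
    case True
    then show ?thesis using c y1 2(3) by auto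
  next
    case False
    then show ?thesis using c y1 2(3) by force
  qed
qed

lemma ps_sweep_on_mesh:
  assumes "ps_sweep g D is y y'"
  shows "on_mesh D y y'"
  using assms
proof (induction rule: ps_sweep.induct)
  case (1 y)
  show ?case by (rule on_mesh_refl)
next
  case (2 i y y1 "is" y2)
  from 2(1) obtain c where c: "c \<in> ps_candidates y i D" and y1: "y1 = (if g c < g y then c else y)"
    unfolding ps_point_step_def by blast
  have "on_mesh D y c"
  proof -
    from c obtain l and s :: real where s: "s \<in> {-1, 1}" and "c = ps_move y i l s D"
      unfolding ps_candidates_def by blast
    then have "c = y + (of_int (if s = 1 then 1 else -1) * D) *\<^sub>R axis i (axis l 1)"
      by (auto simp: ps_move_eq_add_Basis)
    then show ?thesis
      by (simp add: on_mesh_add_Basis)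
  qed
  then have "on_mesh D y y1"
    using y1 by (simp add: on_mesh_refl)
  then show ?case
    using 2(3) by (rule on_mesh_trans)
qed

lemma ps_epoch_unsuccessful_imp_mesh_local_min:
  fixes y :: "real^('l::finite)^('n::{finite,linorder})"
  assumes "ps_epoch g D y y'" and "\<not> g y' < g y"
  shows "mesh_local_min g D y"
  unfolding mesh_local_min_def
proof
  fix b :: "real^('l::finite)^('n::{finite,linorder})" assume "b \<in> Basis"
  then obtain i l where b: "b = axis i (axis l 1)"
    by (rule Basis_vec_vec_cases)
  have "\<forall>c\<in>ps_candidates y i D. g y \<le> g c"
    using ps_sweep_descent[OF assms(1)[unfolded ps_epoch_def]] assms(2) by simp
  moreover have "y + D *\<^sub>R b = ps_move y i l 1 D" and "y - D *\<^sub>R b = ps_move y i l (-1) D"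
    by (simp_all add: b ps_move_eq_add_Basis)
  then have "y + D *\<^sub>R b \<in> ps_candidates y i D" and "y - D *\<^sub>R b \<in> ps_candidates y i D"
    unfolding ps_candidates_def by blast+
  ultimately show "g y \<le> g (y + D *\<^sub>R b) \<and> g y \<le> g (y - D *\<^sub>R b)"
    by blast
qed

lemma bounded_seq_not_uniformly_separated:
  fixes f :: "nat \<Rightarrow> 'a::heine_borel"
  assumes "bounded (range f)" and "0 < d"
  obtains m n where "m < n" and "dist (f m) (f n) < d"
proof -
  obtain l r where r: "strict_mono r" and lim: "(f \<circ> r) \<longlonglongrightarrow> l"
    using bounded_imp_convergent_subsequence[OF assms(1)] by blast
  from lim have "Cauchy (f \<circ> r)"
    by (rule LIMSEQ_imp_Cauchy)
  then obtain N where "\<forall>m\<ge>N. \<forall>n\<ge>N. dist ((f \<circ> r) m) ((f \<circ> r) n) < d"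
    using assms(2) unfolding Cauchy_def by blast
  then show thesis
    using that[of "r N" "r (Suc N)"] strict_monoD[OF r, of N "Suc N"] by simp
qed

lemma gradient_eqI:
  assumes "GDERIV f x :> v"
  shows "gradient f x = v"
  unfolding gradient_def
proof (rule the_equality)
  show "GDERIV f x :> v" by (rule assms)
next
  fix w assume "GDERIV f x :> w"
  then have "(\<lambda>h. h \<bullet> w) = (\<lambda>h. h \<bullet> v)"
    using assms unfolding gderiv_def by (rule has_derivative_unique)
  then have "(w - v) \<bullet> w = (w - v) \<bullet> v"
    by metis
  then have "(w - v) \<bullet> (w - v) = 0"
    by (simp add: inner_diff_right)
  then show "w = v"
    by simp
qed

lemma liminf_ereal_eq_0I:
  fixes f :: "nat \<Rightarrow> real"
  assumes nonneg: "\<And>k. 0 \<le> f k" and small: "\<And>e n. 0 < e \<Longrightarrow> \<exists>k\<ge>n. f k \<le> e"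
  shows "liminf (\<lambda>k. ereal (f k)) = 0"
proof (rule antisym)
  show "liminf (\<lambda>k. ereal (f k)) \<le> 0"
    unfolding liminf_SUP_INF
  proof (rule SUP_least)
    fix n
    show "(INF k\<in>{n..}. ereal (f k)) \<le> 0"
    proof (rule ereal_le_epsilon2)
      fix e :: real assume "0 < e"
      then obtain k where "n \<le> k" and "f k \<le> e"
        using small by blast
      then have "(INF k\<in>{n..}. ereal (f k)) \<le> ereal (f k)"
        by (intro INF_lower) simp
      also have "\<dots> \<le> 0 + ereal e"
        using \<open>f k \<le> e\<close> by simp
      finally show "(INF k\<in>{n..}. ereal (f k)) \<le> 0 + ereal e" .
    qed
  qed
  show "0 \<le> liminf (\<lambda>k. ereal (f k))"
    by (rule Liminf_bounded) (simp add: nonneg)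
qed

locale pattern_search =
  fixes g :: "real^('l::finite)^('n::{finite,linorder}) \<Rightarrow> real"
    and z0 :: "real^('l::finite)^('n::{finite,linorder})" and D0 :: real
    and z :: "nat \<Rightarrow> real^('l::finite)^('n::{finite,linorder})" and D :: "nat \<Rightarrow> real"
  assumes D0_pos: "0 < D0"
    and generated: "pattern_search_seq g z0 D0 z D"
begin

abbreviation successful :: "nat \<Rightarrow> bool" where
  "successful k \<equiv> g (z (Suc k)) < g (z k)"

lemma z_0: "z 0 = z0"
  and D_0: "D 0 = D0"
  and epoch: "ps_epoch g (D k) (z k) (z (Suc k))"
  and D_Suc: "D (Suc k) = (if successful k then D k else D k / 2)"
  using generated unfolding pattern_search_seq_def by auto

lemma objective_decseq: "decseq (\<lambda>k. g (z k))"
  using ps_sweep_descent epoch unfolding ps_epoch_def by (blast intro: decseq_SucI)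

lemma z_in_level_set: "g (z k) \<le> g z0"
  using decseqD[OF objective_decseq, of 0 k] by (simp add: z_0)

lemma D_pos: "0 < D k"
  by (induction k) (simp_all add: D_0 D0_pos D_Suc)

lemma D_decseq: "decseq D"
  using D_pos by (intro decseq_SucI) (simp add: D_Suc)

lemma unsuccessful_infinitely_often:
  assumes "bounded {x. g x \<le> g z0}"
  shows "\<exists>k\<ge>M. \<not> successful k"
proof (rule ccontr)
  assume "\<not> ?thesis"
  then have succ: "successful k" if "M \<le> k" for k
    using that by blast
  have D_const: "D k = D M" if "M \<le> k" for k
    using that by (induction k rule: dec_induct) (simp_all add: D_Suc succ)
  have mesh: "on_mesh (D M) (z M) (z k)" if "M \<le> k" for k
    using that
  proof (induction k rule: dec_induct)
    case base
    show ?case by (rule on_mesh_refl)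
  next
    case (step k)
    have "on_mesh (D M) (z k) (z (Suc k))"
      using ps_sweep_on_mesh epoch[of k] D_const[OF step(1)] unfolding ps_epoch_def by simp
    with step(3) show ?case
      by (rule on_mesh_trans)
  qed
  have separated: "D M \<le> dist (z (M + m)) (z (M + n))" if "m < n" for m n
  proof (rule on_mesh_dist_ge[OF mesh mesh _ D_pos])
    have "g (z (M + n)) \<le> g (z (Suc (M + m)))"
      using decseqD[OF objective_decseq] that by simp
    also have "\<dots> < g (z (M + m))"
      by (simp add: succ)
    finally show "z (M + m) \<noteq> z (M + n)"
      by auto
  qed simp_all
  have "bounded (range (\<lambda>k. z (M + k)))"
    using assms by (rule bounded_subset) (auto intro: z_in_level_set)
  then obtain m n where "m < n" and "dist (z (M + m)) (z (M + n)) < D M"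
    using bounded_seq_not_uniformly_separated D_pos by blast
  with separated show False
    by fastforce
qed

lemma D_eventually_le:
  assumes "bounded {x. g x \<le> g z0}"
  shows "\<exists>M. \<forall>k\<ge>M. D k \<le> D0 / 2 ^ j"
proof (induction j)
  case 0
  show ?case
    using decseqD[OF D_decseq, of 0] by (auto simp: D_0)
next
  case (Suc j)
  then obtain M where M: "\<forall>k\<ge>M. D k \<le> D0 / 2 ^ j"
    by blast
  obtain k where "M \<le> k" and "\<not> successful k"
    using unsuccessful_infinitely_often[OF assms] by blast
  with M have "D (Suc k) \<le> D0 / 2 ^ Suc j"
    by (simp add: D_Suc)
  then show ?case
    using decseqD[OF D_decseq, of "Suc k"] by (meson order_trans)
qed

lemma mesh_local_min_arbitrarily_late:
  assumes "bounded {x. g x \<le> g z0}" and "0 < d"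
  obtains k where "n \<le> k" and "D k < d" and "mesh_local_min g (D k) (z k)"
proof -
  obtain j where j: "(1/2::real) ^ j < d / D0"
    using real_arch_pow_inv[of "d / D0" "1/2"] assms(2) D0_pos by auto
  obtain M where M: "\<forall>k\<ge>M. D k \<le> D0 / 2 ^ j"
    using D_eventually_le[OF assms(1)] by blast
  obtain k where k: "n \<le> k" "M \<le> k" "\<not> successful k"
    using unsuccessful_infinitely_often[OF assms(1), of "max n M"] by auto
  have "D k \<le> D0 * (1/2) ^ j"
    using M k by (simp add: power_one_over)
  also have "\<dots> < d"
    using j D0_pos by (simp add: field_simps)
  finally show thesis
    using that k ps_epoch_unsuccessful_imp_mesh_local_min[OF epoch] by simp
qed

end

theorem mainTheorem1:
  fixes \<delta> :: "real^('n::{finite,linorder})^('n::{finite,linorder})"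
    and z0 :: "real^('l::finite)^('n::{finite,linorder})"
    and D0 :: real and \<eta> :: real
    and z :: "nat \<Rightarrow> real^('l::finite)^('n::{finite,linorder})" and D :: "nat \<Rightarrow> real"
  assumes "D0 > 0"
    and "pattern_search_seq (mds_stress \<delta>) z0 D0 z D"
    and "closed {x :: real^('l::finite)^('n::{finite,linorder}). mds_stress \<delta> x \<le> mds_stress \<delta> z0}"
    and "bounded {x :: real^('l::finite)^('n::{finite,linorder}). mds_stress \<delta> x \<le> mds_stress \<delta> z0}"
    and "\<eta> > 0"
    and "\<exists>G. (\<forall>x\<in>(\<Union>a\<in>{x :: real^('l::finite)^('n::{finite,linorder}). mds_stress \<delta> x \<le> mds_stress \<delta> z0}. ball a \<eta>).
                 GDERIV (mds_stress \<delta>) x :> G x)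
           \<and> continuous_on (\<Union>a\<in>{x :: real^('l::finite)^('n::{finite,linorder}). mds_stress \<delta> x \<le> mds_stress \<delta> z0}. ball a \<eta>) G"
  shows "liminf (\<lambda>k. ereal (norm (gradient (mds_stress \<delta>) (z k)))) = 0"
proof -
  (* mds_stress \<delta> is polymorphic in the point dimension 'l, which has to be fixed here *)
  let ?g = "mds_stress \<delta> :: real^('l::finite)^('n::{finite,linorder}) \<Rightarrow> real"
  interpret pattern_search ?g z0 D0 z D
    using assms(1,2) by unfold_locales
  define L where "L = {x. ?g x \<le> ?g z0}"
  obtain G where der: "\<forall>y\<in>(\<Union>a\<in>L. ball a \<eta>). GDERIV ?g y :> G y"
    and cont: "continuous_on (\<Union>a\<in>L. ball a \<eta>) G"
    using assms(6) unfolding L_def by blast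
  have "compact L"
    using assms(3,4) unfolding L_def by (simp add: compact_eq_bounded_closed)
  have z_in_L: "z k \<in> L" for k
    using z_in_level_set by (simp add: L_def)
  have gradient: "gradient ?g (z k) = G (z k)" for k
    using z_in_L[of k] assms(5) by (intro gradient_eqI der[rule_format] UN_I[of "z k"]) auto
  have "\<exists>k\<ge>n. norm (gradient ?g (z k)) \<le> e" if "0 < e" for e n
  proof -
    obtain d where "0 < d"
      and small: "\<And>x h. x \<in> L \<Longrightarrow> 0 < h \<Longrightarrow> h < d \<Longrightarrow> mesh_local_min ?g h x \<Longrightarrow> norm (G x) \<le> e"
      using gradient_small_at_mesh_local_min[OF \<open>compact L\<close> assms(5) der[rule_format] cont \<open>0 < e\<close>]
      by blast
    obtain k where "n \<le> k" and "D k < d" and "mesh_local_min ?g (D k) (z k)"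
      using mesh_local_min_arbitrarily_late[OF assms(4) \<open>0 < d\<close>] by blast
    with small[OF z_in_L D_pos] show ?thesis
      by (auto simp: gradient)
  qed
  then show ?thesis
    by (intro liminf_ereal_eq_0I) simp_all
qed

end
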